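(* Let $F$ be a graph of diameter $2$, $n=|V(F)|$, $t=\delta(F)$, and let $l>n$ be an integer. Then $\delta_l\le n!\,C_{l-2}^{n-t-2}$.
   Context: All graphs are simple, finite, undirected. The $F$-degree of a vertex $v$ in $G$ is the number of subgraphs of $G$ (not necessarily induced) isomorphic to $F$ and containing $v$. $A_{2l-1}$ is the graph with vertex set $\{1,\dots,2l-1\}$ in which distinct $i,j$ are adjacent iff $|i-j|\le l-1$; $F_{2l}$ is obtained from $A_{2l-1}$ by adding a new vertex $2l$ joined exactly to $1,\dots,t$. $z_i$ is the $F$-degree of $i$ in $A_{2l-1}$, $f_i$ the $F$-degree of $i$ in $F_{2l}$, and $\delta_i=f_i-z_i$. $C_m^k=\frac{m!}{k!(m-k)!}$ for integers $m\ge k\ge 0$, and $C_m^k=0$ otherwise. *)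

theory Defs
  imports Main
begin

definition simple_graph :: "'a set \<Rightarrow> 'a set set \<Rightarrow> bool" where
  "simple_graph V E \<longleftrightarrow> finite V \<and>
     (\<forall>e\<in>E. \<exists>x y. x \<noteq> y \<and> e = {x, y} \<and> x \<in> V \<and> y \<in> V)"

definition degree :: "'a set set \<Rightarrow> 'a \<Rightarrow> nat" where
  "degree E v = card {u. {v, u} \<in> E}"

definition min_degree :: "'a set \<Rightarrow> 'a set set \<Rightarrow> nat" where
  "min_degree V E = Min (degree E ` V)"

fun walk :: "'a set set \<Rightarrow> 'a list \<Rightarrow> bool" where
  "walk E [] = True"
| "walk E [x] = True"
| "walk E (x # y # xs) = ({x, y} \<in> E \<and> walk E (y # xs))"

definition dist_le :: "'a set \<Rightarrow> 'a set set \<Rightarrow> 'a \<Rightarrow> 'a \<Rightarrow> nat \<Rightarrow> bool" where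
  "dist_le V E u v k \<longleftrightarrow> (\<exists>xs. xs \<noteq> [] \<and> hd xs = u \<and> last xs = v \<and> set xs \<subseteq> V
       \<and> walk E xs \<and> length xs \<le> k + 1)"

definition has_diameter :: "'a set \<Rightarrow> 'a set set \<Rightarrow> nat \<Rightarrow> bool" where
  "has_diameter V E d \<longleftrightarrow> (\<forall>u\<in>V. \<forall>v\<in>V. dist_le V E u v d) \<and>
       (\<exists>u\<in>V. \<exists>v\<in>V. \<not> dist_le V E u v (d - 1))"

definition graph_iso :: "'b set \<Rightarrow> 'b set set \<Rightarrow> 'a set \<Rightarrow> 'a set set \<Rightarrow> bool" where
  "graph_iso V1 E1 V2 E2 \<longleftrightarrow> (\<exists>f. bij_betw f V1 V2 \<and>
      (\<forall>x\<in>V1. \<forall>y\<in>V1. {x, y} \<in> E1 \<longleftrightarrow> {f x, f y} \<in> E2))"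

text \<open>F-degree of v in G: number of (not necessarily induced) subgraphs of G
  isomorphic to F that contain v.\<close>
definition F_degree :: "'b set \<Rightarrow> 'b set set \<Rightarrow> 'a set \<Rightarrow> 'a set set \<Rightarrow> 'a \<Rightarrow> nat" where
  "F_degree VF EF V E v = card {(W, D). W \<subseteq> V \<and> D \<subseteq> E \<and> (\<forall>e\<in>D. e \<subseteq> W) \<and> v \<in> W
      \<and> graph_iso VF EF W D}"

text \<open>A_{2l-1}: vertices 1..2l-1, i~j iff 0<|i-j|<=l-1\<close>
definition A_V :: "nat \<Rightarrow> nat set" where
  "A_V l = {1..2*l-1}"

definition A_E :: "nat \<Rightarrow> nat set set" where
  "A_E l = {{i, j} | i j. i \<in> A_V l \<and> j \<in> A_V l \<and> i \<noteq> j \<and> i - j \<le> l - 1 \<and> j - i \<le> l - 1}"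

text \<open>F_{2l}: add vertex 2l joined exactly to 1..t\<close>
definition FF_V :: "nat \<Rightarrow> nat set" where
  "FF_V l = {1..2*l}"

definition FF_E :: "nat \<Rightarrow> nat \<Rightarrow> nat set set" where
  "FF_E l t = A_E l \<union> {{2*l, i} | i. 1 \<le> i \<and> i \<le> t}"

text \<open>C_m^k, zero outside 0<=k<=m\<close>
definition Cb :: "int \<Rightarrow> int \<Rightarrow> int" where
  "Cb m k = (if 0 \<le> k \<and> k \<le> m then int (nat m choose nat k) else 0)"

end

theory Submission
  imports Defs "HOL-Combinatorics.Permutations"
begin

text \<open>A copy of F in F_{2l} through l either avoids the new vertex 2l, and then it is a copy in
  A_{2l-1}, or it contains 2l. In the second case the preimage of 2l has at least t neighbours,
  which must be mapped onto the t neighbours 1..t of 2l; as F has diameter 2, every other vertex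
  is adjacent to one of them and so lies in 1..t+l-1. Hence the vertex set consists of 1..t, l,
  2l and n-t-2 of the l-2 vertices of {t+1..t+l-1} - {l}, and on a fixed vertex set there are at
  most n! edge sets, namely the images of the edges of F under bijections.\<close>

lemma simple_graph_edgeD:
  assumes "simple_graph V E" and "{u, v} \<in> E"
  shows "u \<noteq> v" and "u \<in> V" and "v \<in> V"
  using assms unfolding simple_graph_def by (metis doubleton_eq_iff)+

lemma dist_le_refl: "u \<in> V \<Longrightarrow> dist_le V E u u k"
  unfolding dist_le_def by (rule exI[of _ "[u]"]) simp

lemma dist_le_1_if_edge: "u \<in> V \<Longrightarrow> v \<in> V \<Longrightarrow> {u, v} \<in> E \<Longrightarrow> dist_le V E u v 1"
  unfolding dist_le_def by (rule exI[of _ "[u, v]"]) simp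

lemma dist_le_2_cases:
  assumes "dist_le V E u v 2"
  obtains "u = v" | "{u, v} \<in> E" | w where "w \<in> V" and "{u, w} \<in> E" and "{w, v} \<in> E"
proof -
  obtain xs where xs: "xs \<noteq> []" "hd xs = u" "last xs = v" "set xs \<subseteq> V" "walk E xs"
      "length xs \<le> 3"
    using assms unfolding dist_le_def by (auto simp: numeral_3_eq_3)
  then consider "xs = [u]" | "xs = [u, v]" | w where "xs = [u, w, v]"
    by (auto simp: length_Suc_conv le_Suc_eq numeral_3_eq_3)
  then show ?thesis
    using xs that by cases auto
qed

lemma finite_neighbours:
  assumes "simple_graph V E"
  shows "finite {v. {u, v} \<in> E}"
proof (rule finite_subset)
  show "{v. {u, v} \<in> E} \<subseteq> V"
    using simple_graph_edgeD(3)[OF assms] by blast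
  show "finite V"
    using assms by (simp add: simple_graph_def)
qed

lemma diameter_2_min_degree_bounds:
  assumes G: "simple_graph V E" and diam: "has_diameter V E 2"
  shows "1 \<le> min_degree V E" and "min_degree V E + 2 \<le> card V"
proof -
  have finV: "finite V"
    using G by (simp add: simple_graph_def)
  obtain u0 v0 where uv0: "u0 \<in> V" "v0 \<in> V" "\<not> dist_le V E u0 v0 1"
    using diam by (auto simp: has_diameter_def)
  then have "u0 \<noteq> v0" and "{u0, v0} \<notin> E"
    using dist_le_refl[of u0 V E 1] dist_le_1_if_edge[of u0 V v0 E] by auto
  have "1 \<le> degree E u" if u: "u \<in> V" for u
  proof -
    obtain v where v: "v \<in> V" "v \<noteq> u"
      using uv0 \<open>u0 \<noteq> v0\<close> by metis
    then have "dist_le V E u v 2"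
      using diam u by (simp add: has_diameter_def)
    then have "{v. {u, v} \<in> E} \<noteq> {}"
      by (rule dist_le_2_cases) (use v in auto)
    then show ?thesis
      using finite_neighbours[OF G] by (simp add: degree_def Suc_le_eq card_gt_0_iff)
  qed
  then show "1 \<le> min_degree V E"
    unfolding min_degree_def using finV uv0 by (intro Min.boundedI) auto
  have pair: "{u0, v0} \<subseteq> V" "card {u0, v0} = 2"
    using uv0 \<open>u0 \<noteq> v0\<close> by auto
  have "min_degree V E \<le> degree E u0"
    using finV uv0 by (simp add: min_degree_def)
  also have "\<dots> \<le> card (V - {u0, v0})"
    unfolding degree_def using finV simple_graph_edgeD[OF G] \<open>{u0, v0} \<notin> E\<close>
    by (intro card_mono) blast+
  also have "\<dots> = card V - 2"
    using pair by (simp add: card_Diff_subset)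
  finally show "min_degree V E + 2 \<le> card V"
    using card_mono[OF finV pair(1)] pair(2) by linarith
qed

lemma iso_image_diameter_2:
  assumes diam: "has_diameter VF EF 2" and f: "bij_betw f VF W"
    and fE: "\<forall>x\<in>VF. \<forall>y\<in>VF. {x, y} \<in> EF \<longleftrightarrow> {f x, f y} \<in> D"
    and "u \<in> W" and "w \<in> W"
  shows "u = w \<or> {u, w} \<in> D \<or> (\<exists>q\<in>W. {u, q} \<in> D \<and> {q, w} \<in> D)"
proof -
  obtain x y where xy: "x \<in> VF" "y \<in> VF" "u = f x" "w = f y"
    using f \<open>u \<in> W\<close> \<open>w \<in> W\<close> by (auto simp: bij_betw_def)
  then have "dist_le VF EF x y 2"
    using diam by (simp add: has_diameter_def)
  then show ?thesis
  proof (cases rule: dist_le_2_cases)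
    case (3 z)
    then have "f z \<in> W"
      using f by (auto simp: bij_betw_def)
    then show ?thesis
      using 3 fE xy by blast
  qed (use fE xy in auto)
qed

lemma iso_image_degree_ge:
  assumes G: "simple_graph VF EF" and f: "bij_betw f VF W"
    and fE: "\<forall>x\<in>VF. \<forall>y\<in>VF. {x, y} \<in> EF \<longleftrightarrow> {f x, f y} \<in> D"
    and fin: "finite {w. {f x, w} \<in> D}" and x: "x \<in> VF"
  shows "degree EF x \<le> card {w. {f x, w} \<in> D}"
proof -
  have N: "{y. {x, y} \<in> EF} \<subseteq> VF"
    using simple_graph_edgeD(3)[OF G] by blast
  then have "f ` {y. {x, y} \<in> EF} \<subseteq> {w. {f x, w} \<in> D}"
    using fE x by blast
  moreover have "inj_on f {y. {x, y} \<in> EF}"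
    using f N by (auto simp: bij_betw_def intro: inj_on_subset)
  ultimately show ?thesis
    unfolding degree_def using fin by (metis card_image card_mono)
qed

lemma iso_image_edges:
  assumes G: "simple_graph VF EF" and f: "bij_betw f VF W"
    and fE: "\<forall>x\<in>VF. \<forall>y\<in>VF. {x, y} \<in> EF \<longleftrightarrow> {f x, f y} \<in> D"
    and D: "\<forall>e\<in>D. \<exists>u\<in>W. \<exists>v\<in>W. e = {u, v}"
  shows "D = (`) f ` EF"
proof
  show "D \<subseteq> (`) f ` EF"
  proof
    fix e assume "e \<in> D"
    moreover obtain x y where "x \<in> VF" "y \<in> VF" "e = {f x, f y}"
      using D \<open>e \<in> D\<close> f by (auto simp: bij_betw_def)
    ultimately show "e \<in> (`) f ` EF"
      using fE by (intro image_eqI[of _ _ "{x, y}"]) auto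
  qed
  show "(`) f ` EF \<subseteq> D"
    using G fE unfolding simple_graph_def by auto
qed

definition iso_images :: "'b set \<Rightarrow> 'b set set \<Rightarrow> 'a set \<Rightarrow> 'a set set set" where
  "iso_images VF EF W = {(`) f ` EF | f. bij_betw f VF W}"

lemma iso_images_subset_permutations:
  assumes EF: "\<forall>e\<in>EF. e \<subseteq> VF" and g: "bij_betw g VF W"
  shows "iso_images VF EF W \<subseteq> (\<lambda>p. (`) (g \<circ> p) ` EF) ` {p. p permutes VF}"
proof
  fix D assume "D \<in> iso_images VF EF W"
  then obtain f where f: "bij_betw f VF W" and D: "D = (`) f ` EF"
    unfolding iso_images_def by blast
  define p where "p x = (if x \<in> VF then inv_into VF g (f x) else x)" for x
  have "bij_betw (inv_into VF g \<circ> f) VF VF"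
    using f bij_betw_inv_into[OF g] by (rule bij_betw_trans)
  then have "bij_betw p VF VF"
    using bij_betw_cong[of VF p "inv_into VF g \<circ> f" VF] by (simp add: p_def)
  then have p: "p permutes VF"
    by (rule bij_imp_permutes) (simp add: p_def)
  have gp: "g (p x) = f x" if "x \<in> VF" for x
    using that f g by (auto simp: p_def bij_betw_def f_inv_into_f)
  have "(`) (g \<circ> p) ` EF = D"
    unfolding D
  proof (rule image_cong[OF refl])
    fix e assume "e \<in> EF"
    then show "(g \<circ> p) ` e = f ` e"
      using EF gp by (intro image_cong) auto
  qed
  then show "D \<in> (\<lambda>p. (`) (g \<circ> p) ` EF) ` {p. p permutes VF}"
    using p by blast
qed

lemma finite_iso_images:
  assumes "finite VF" and "\<forall>e\<in>EF. e \<subseteq> VF"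
  shows "finite (iso_images VF EF W)"
proof (cases "iso_images VF EF W = {}")
  case False
  then obtain g where "bij_betw g VF W"
    unfolding iso_images_def by blast
  then show ?thesis
    using iso_images_subset_permutations assms
    by (metis finite_permutations finite_imageI finite_subset)
qed simp

lemma card_iso_images_le:
  assumes "finite VF" and "\<forall>e\<in>EF. e \<subseteq> VF"
  shows "card (iso_images VF EF W) \<le> fact (card VF)"
proof (cases "iso_images VF EF W = {}")
  case False
  then obtain g where g: "bij_betw g VF W"
    unfolding iso_images_def by blast
  let ?P = "{p. p permutes VF}"
  have "card (iso_images VF EF W) \<le> card ((\<lambda>p. (`) (g \<circ> p) ` EF) ` ?P)"
    using iso_images_subset_permutations[OF assms(2) g] assms(1)
    by (intro card_mono) (simp_all add: finite_permutations)
  also have "\<dots> \<le> card ?P"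
    using assms(1) by (intro card_image_le) (simp add: finite_permutations)
  also have "\<dots> = fact (card VF)"
    using assms(1) by (simp add: card_permutations)
  finally show ?thesis .
qed simp

lemma FF_E_top_neighbour: "{2 * l, w} \<in> FF_E l t \<Longrightarrow> w \<in> {1..t}"
  unfolding FF_E_def A_E_def A_V_def by (auto simp: doubleton_eq_iff)

lemma FF_E_span: "{u, w} \<in> FF_E l t \<Longrightarrow> u \<noteq> 2 * l \<Longrightarrow> w \<noteq> 2 * l \<Longrightarrow> w \<le> u + (l - 1)"
  unfolding FF_E_def A_E_def by (auto simp: doubleton_eq_iff)

lemma FF_E_doubleton: "e \<in> FF_E l t \<Longrightarrow> \<exists>u v. e = {u, v}"
  unfolding FF_E_def A_E_def by auto

lemma FF_E_without_top: "e \<in> FF_E l t \<Longrightarrow> 2 * l \<notin> e \<Longrightarrow> e \<in> A_E l"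
  unfolding FF_E_def by auto

lemma finite_A_E: "finite (A_E l)"
  by (rule finite_subset[of _ "Pow (A_V l)"]) (auto simp: A_E_def A_V_def)

lemma finite_FF_E: "finite (FF_E l t)"
proof -
  have "{{2 * l, i} | i. 1 \<le> i \<and> i \<le> t} = (\<lambda>i. {2 * l, i}) ` {1..t}"
    by auto
  then show ?thesis
    using finite_A_E by (simp add: FF_E_def)
qed

lemma FF_subgraph_vertices_through_top:
  assumes W: "W \<subseteq> FF_V l" and D: "D \<subseteq> FF_E l t" "\<forall>e\<in>D. e \<subseteq> W" and top: "2 * l \<in> W"
    and close: "\<And>w. w \<in> W \<Longrightarrow> w = 2 * l \<or> {2 * l, w} \<in> D \<or> (\<exists>q\<in>W. {2 * l, q} \<in> D \<and> {q, w} \<in> D)"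
    and deg: "t \<le> card {w. {2 * l, w} \<in> D}"
  shows "{1..t} \<subseteq> W" and "W \<subseteq> insert (2 * l) {1..t + (l - 1)}"
proof -
  have N: "{w. {2 * l, w} \<in> D} \<subseteq> {1..t}"
    using D FF_E_top_neighbour by blast
  then have "{w. {2 * l, w} \<in> D} = {1..t}"
    using deg by (intro card_seteq) auto
  then show "{1..t} \<subseteq> W"
    using D(2) by blast
  show "W \<subseteq> insert (2 * l) {1..t + (l - 1)}"
  proof
    fix w assume w: "w \<in> W"
    have "1 \<le> w"
      using w W by (auto simp: FF_V_def)
    moreover have "w \<le> t + (l - 1)" if "w \<noteq> 2 * l"
      using close[OF w]
    proof (elim disjE bexE conjE)
      show "{2 * l, w} \<in> D \<Longrightarrow> ?thesis"
        using N by auto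
      fix q assume q: "{2 * l, q} \<in> D" "{q, w} \<in> D"
      show ?thesis
      proof (cases "q = 2 * l")
        case True
        then show ?thesis
          using N q(2) by auto
      next
        case False
        moreover have "q \<le> t"
          using N q(1) by auto
        ultimately show ?thesis
          using D(1) q(2) FF_E_span[of q w l t] \<open>w \<noteq> 2 * l\<close> by auto
      qed
    qed (use that in simp)
    ultimately show "w \<in> insert (2 * l) {1..t + (l - 1)}"
      by auto
  qed
qed

lemma card_sets_between:
  assumes "finite B" and "finite S" and "B \<inter> S = {}" and "card B \<le> k"
  shows "card {W. B \<subseteq> W \<and> W \<subseteq> B \<union> S \<and> card W = k} = card S choose (k - card B)"
proof -
  let ?X = "{X. X \<subseteq> S \<and> card X = k - card B}"
  have "{W. B \<subseteq> W \<and> W \<subseteq> B \<union> S \<and> card W = k} = (\<union>) B ` ?X"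
  proof (intro equalityI image_subsetI subsetI)
    fix W assume "W \<in> {W. B \<subseteq> W \<and> W \<subseteq> B \<union> S \<and> card W = k}"
    then have "W = B \<union> (W - B)" "W - B \<in> ?X"
      using assms by (auto simp: card_Diff_subset intro: finite_subset[of W "B \<union> S"])
    then show "W \<in> (\<union>) B ` ?X"
      by blast
  next
    fix X assume X: "X \<in> ?X"
    then have "finite X" and "B \<inter> X = {}"
      using assms finite_subset[of X S] by auto
    then have "card (B \<union> X) = k"
      using X assms by (simp add: card_Un_disjoint)
    then show "B \<union> X \<in> {W. B \<subseteq> W \<and> W \<subseteq> B \<union> S \<and> card W = k}"
      using X by blast
  qed
  moreover have "inj_on ((\<union>) B) ?X"
    using assms(3) by (intro inj_onI) blast
  ultimately show ?thesis
    using assms(2) by (simp add: card_image n_subsets)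
qed

definition copies :: "'b set \<Rightarrow> 'b set set \<Rightarrow> 'a set \<Rightarrow> 'a set set \<Rightarrow> 'a \<Rightarrow> ('a set \<times> 'a set set) set" where
  "copies VF EF V E v = {(W, D). W \<subseteq> V \<and> D \<subseteq> E \<and> (\<forall>e\<in>D. e \<subseteq> W) \<and> v \<in> W
      \<and> graph_iso VF EF W D}"

lemma F_degree_eq_card_copies: "F_degree VF EF V E v = card (copies VF EF V E v)"
  by (simp add: F_degree_def copies_def)

lemma finite_copies: "finite V \<Longrightarrow> finite E \<Longrightarrow> finite (copies VF EF V E v)"
  by (rule finite_subset[of _ "Pow V \<times> Pow E"]) (auto simp: copies_def)

lemma copies_FF_subset:
  "copies VF EF (FF_V l) (FF_E l t) v
     \<subseteq> copies VF EF (A_V l) (A_E l) v \<union> {(W, D) \<in> copies VF EF (FF_V l) (FF_E l t) v. 2 * l \<in> W}"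
proof
  fix c assume "c \<in> copies VF EF (FF_V l) (FF_E l t) v"
  moreover obtain W D where WD: "c = (W, D)"
    by fastforce
  ultimately have c: "(W, D) \<in> copies VF EF (FF_V l) (FF_E l t) v"
    by simp
  show "c \<in> copies VF EF (A_V l) (A_E l) v \<union> {(W, D) \<in> copies VF EF (FF_V l) (FF_E l t) v. 2 * l \<in> W}"
  proof (cases "2 * l \<in> W")
    case True
    then show ?thesis
      using c WD by simp
  next
    case False
    have "W \<subseteq> A_V l"
    proof
      fix w assume "w \<in> W"
      then have "w \<in> {1..2 * l}" and "w \<noteq> 2 * l"
        using c False by (auto simp: copies_def FF_V_def)
      then show "w \<in> A_V l"
        unfolding A_V_def by simp linarith
    qed
    moreover have "D \<subseteq> A_E l"
      using c False FF_E_without_top by (fastforce simp: copies_def)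
    ultimately show ?thesis
      using c WD by (auto simp: copies_def)
  qed
qed

lemma FF_copy_through_top_shape:
  assumes G: "simple_graph VF EF" and diam: "has_diameter VF EF 2" and t: "t = min_degree VF EF"
    and c: "(W, D) \<in> copies VF EF (FF_V l) (FF_E l t) v" and top: "2 * l \<in> W"
  shows "{1..t} \<subseteq> W" and "W \<subseteq> insert (2 * l) {1..t + (l - 1)}"
    and "card W = card VF" and "D \<in> iso_images VF EF W"
proof -
  obtain f where f: "bij_betw f VF W"
    and fE: "\<forall>x\<in>VF. \<forall>y\<in>VF. {x, y} \<in> EF \<longleftrightarrow> {f x, f y} \<in> D"
    using c by (auto simp: copies_def graph_iso_def)
  have W: "W \<subseteq> FF_V l" and D: "D \<subseteq> FF_E l t" "\<forall>e\<in>D. e \<subseteq> W"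
    using c by (auto simp: copies_def)
  have fin_W: "finite W"
    using W by (rule finite_subset) (simp add: FF_V_def)
  obtain a where a: "a \<in> VF" "f a = 2 * l"
    using f top by (auto simp: bij_betw_def)
  have "t \<le> degree EF a"
    unfolding t min_degree_def using G a by (simp add: simple_graph_def)
  also have "\<dots> \<le> card {w. {2 * l, w} \<in> D}"
  proof -
    have "{w. {2 * l, w} \<in> D} \<subseteq> W"
      using D(2) by blast
    then show ?thesis
      using iso_image_degree_ge[OF G f fE _ a(1)] a(2) finite_subset[OF _ fin_W] by simp
  qed
  finally have deg: "t \<le> card {w. {2 * l, w} \<in> D}" .
  have close: "w = 2 * l \<or> {2 * l, w} \<in> D \<or> (\<exists>q\<in>W. {2 * l, q} \<in> D \<and> {q, w} \<in> D)"
    if "w \<in> W" for w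
    using iso_image_diameter_2[OF diam f fE top that] by auto
  show "{1..t} \<subseteq> W" and "W \<subseteq> insert (2 * l) {1..t + (l - 1)}"
    using FF_subgraph_vertices_through_top[OF W D top close deg] by auto
  show "card W = card VF"
    using bij_betw_same_card[OF f] by simp
  have "\<forall>e\<in>D. \<exists>u\<in>W. \<exists>v\<in>W. e = {u, v}"
    using D FF_E_doubleton by (metis insert_subset subsetD)
  then show "D \<in> iso_images VF EF W"
    unfolding iso_images_def using iso_image_edges[OF G f fE] f by blast
qed

lemma card_FF_copies_through_top_le:
  assumes G: "simple_graph VF EF" and diam: "has_diameter VF EF 2"
    and n: "n = card VF" and t: "t = min_degree VF EF" and "n < l"
  shows "card {(W, D) \<in> copies VF EF (FF_V l) (FF_E l t) l. 2 * l \<in> W}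
           \<le> fact n * ((l - 2) choose (n - t - 2))"
proof -
  have "1 \<le> t" and "t + 2 \<le> n"
    using diameter_2_min_degree_bounds[OF G diam] n t by auto
  then have "t < l"
    using \<open>n < l\<close> by simp
  define B where "B = {1..t} \<union> {l, 2 * l}"
  define S where "S = {t + 1..t + (l - 1)} - {l}"
  define Ws where "Ws = {W. B \<subseteq> W \<and> W \<subseteq> B \<union> S \<and> card W = n}"
  have "card B = t + 2"
    using \<open>t < l\<close> by (simp add: B_def card_Un_disjoint)
  moreover have "card S = l - 2"
    using \<open>1 \<le> t\<close> \<open>t < l\<close> by (simp add: S_def card_Diff_singleton)
  moreover have "B \<inter> S = {}"
    using \<open>t < l\<close> by (auto simp: B_def S_def)
  ultimately have card_Ws: "card Ws = (l - 2) choose (n - t - 2)"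
    unfolding Ws_def using \<open>t + 2 \<le> n\<close> by (subst card_sets_between) (auto simp: B_def S_def)
  have fin_Ws: "finite Ws"
    unfolding Ws_def by (rule finite_subset[of _ "Pow (B \<union> S)"]) (auto simp: B_def S_def)
  have EF: "\<forall>e\<in>EF. e \<subseteq> VF" and fin_VF: "finite VF"
    using G by (auto simp: simple_graph_def)
  have "{(W, D) \<in> copies VF EF (FF_V l) (FF_E l t) l. 2 * l \<in> W} \<subseteq> (SIGMA W:Ws. iso_images VF EF W)"
  proof clarify
    fix W D assume c: "(W, D) \<in> copies VF EF (FF_V l) (FF_E l t) l" and top: "2 * l \<in> W"
    note shape = FF_copy_through_top_shape[OF G diam t c top]
    have "l \<in> W"
      using c by (simp add: copies_def)
    then have "W \<in> Ws"
      using shape(1-3) top n by (auto simp: Ws_def B_def S_def)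
    then show "W \<in> Ws \<and> D \<in> iso_images VF EF W"
      using shape(4) ..
  qed
  then have "card {(W, D) \<in> copies VF EF (FF_V l) (FF_E l t) l. 2 * l \<in> W}
               \<le> card (SIGMA W:Ws. iso_images VF EF W)"
    using fin_Ws finite_iso_images[OF fin_VF EF] by (intro card_mono) auto
  also have "\<dots> = (\<Sum>W\<in>Ws. card (iso_images VF EF W))"
    using fin_Ws finite_iso_images[OF fin_VF EF] by (intro card_SigmaI) auto
  also have "\<dots> \<le> (\<Sum>W\<in>Ws. fact n)"
    using card_iso_images_le[OF fin_VF EF] n by (intro sum_mono) auto
  finally show ?thesis
    by (simp add: card_Ws mult.commute)
qed

theorem lemma7:
  fixes VF :: "'b set" and EF :: "'b set set" and l n t :: nat
  assumes "simple_graph VF EF"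
    and "has_diameter VF EF 2"
    and "n = card VF"
    and "t = min_degree VF EF"
    and "l > n"
  shows "int (F_degree VF EF (FF_V l) (FF_E l t) l) - int (F_degree VF EF (A_V l) (A_E l) l)
           \<le> int (fact n) * Cb (int l - 2) (int n - int t - 2)"
proof -
  let ?T = "{(W, D) \<in> copies VF EF (FF_V l) (FF_E l t) l. 2 * l \<in> W}"
  have "finite (copies VF EF (FF_V l) (FF_E l t) l)" and "finite (copies VF EF (A_V l) (A_E l) l)"
    by (simp_all add: finite_copies finite_FF_E finite_A_E FF_V_def A_V_def)
  then have "finite (copies VF EF (A_V l) (A_E l) l \<union> ?T)"
    by (auto intro: finite_subset[rotated])
  then have "card (copies VF EF (FF_V l) (FF_E l t) l) \<le> card (copies VF EF (A_V l) (A_E l) l \<union> ?T)"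
    using copies_FF_subset by (rule card_mono)
  also have "\<dots> \<le> card (copies VF EF (A_V l) (A_E l) l) + card ?T"
    by (rule card_Un_le)
  finally have "int (card (copies VF EF (FF_V l) (FF_E l t) l)) - int (card (copies VF EF (A_V l) (A_E l) l))
      \<le> int (card ?T)"
    by linarith
  also have "\<dots> \<le> int (fact n * ((l - 2) choose (n - t - 2)))"
    using card_FF_copies_through_top_le[OF assms] by (rule of_nat_mono)
  also have "\<dots> = int (fact n) * Cb (int l - 2) (int n - int t - 2)"
    using diameter_2_min_degree_bounds[OF assms(1,2)] assms(3-5)
    by (simp add: Cb_def nat_diff_distrib)
  finally show ?thesis
    unfolding F_degree_eq_card_copies .
qed

end
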